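(* Let $n\geq 2$ be an integer and let $\sigma\colon E(K_{4n})\to\{-1,1\}$ be such that the graph $\left(V(K_{4n}),\sigma^{-1}(1)\right)$ is the disjoint union of a complete graph of order $3n+2$ and $n-2$ isolated vertices. Then $\left|\sigma\left(E(K_{4n})\right)\right|=n^2+11n+2$, and $|\sigma(M)|\geq 4$ for every perfect matching $M$ in $K_{4n}$.
   Context: $K_{4n}$ denotes the complete graph on $4n$ vertices, with vertex set $V(K_{4n})$ and edge set $E(K_{4n})$. For a set $F$ of edges, $\sigma(F)=\sum_{e\in F}\sigma(e)$; $\sigma^{-1}(1)$ is the set of edges with value $1$. *)

theory Defs
  imports Main
begin

definition complete_edges :: "'a set \<Rightarrow> 'a set set" where
  "complete_edges V = {e. \<exists>u v. u \<in> V \<and> v \<in> V \<and> u \<noteq> v \<and> e = {u, v}}"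

definition perfect_matching :: "'a set \<Rightarrow> 'a set set \<Rightarrow> bool" where
  "perfect_matching V M \<longleftrightarrow>
     M \<subseteq> complete_edges V \<and>
     (\<forall>e\<in>M. \<forall>f\<in>M. e \<noteq> f \<longrightarrow> e \<inter> f = {}) \<and>
     (\<forall>v\<in>V. \<exists>e\<in>M. v \<in> e)"

definition sigma_sum :: "('a set \<Rightarrow> int) \<Rightarrow> 'a set set \<Rightarrow> int" where
  "sigma_sum \<sigma> F = (\<Sum>e\<in>F. \<sigma> e)"

end

theory Submission
  imports Defs
begin

text \<open>
  An edge gets value 1 exactly when it lies in the clique S, so a \<plusminus>1 labelling of any edge
  set F has sum 2 \<bar>{e \<in> F. e \<subseteq> S}\<bar> - \<bar>F\<bar>. For the whole of K_4n this is
  2 \<cdot> C(3n+2, 2) - C(4n, 2) = n^2 + 11n + 2. A perfect matching has 2n edges, and every edge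
  not inside S contains a vertex outside S; these vertices are distinct, so at most n - 2 edges
  leave S, at least n + 2 lie inside S, and the sum is at least 2(n + 2) - 2n = 4.
\<close>

lemma complete_edges_eq: "complete_edges V = {e. e \<subseteq> V \<and> card e = 2}"
  unfolding complete_edges_def by (auto simp: card_2_iff)

lemma finite_complete_edges: "finite V \<Longrightarrow> finite (complete_edges V)"
  unfolding complete_edges_eq by (rule finite_subset[of _ "Pow V"]) auto

lemma card_complete_edges: "finite V \<Longrightarrow> card (complete_edges V) = card V choose 2"
  by (simp add: complete_edges_eq n_subsets)

lemma complete_edges_inside:
  "S \<subseteq> V \<Longrightarrow> {e \<in> complete_edges V. e \<subseteq> S} = complete_edges S"
  unfolding complete_edges_def by blast

lemma double_choose_two_int: "2 * int (m choose 2) = int m * (int m - 1)"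
proof -
  have "2 * (m choose 2) = m * (m - 1)"
    by (simp add: choose_two) (cases "even m"; auto)
  then show ?thesis
    by (cases m) (simp_all add: algebra_simps flip: of_nat_mult)
qed

lemma sigma_sum_sign_pattern:
  assumes "finite F" and "\<forall>e\<in>F. \<sigma> e = (if P e then 1 else -1)"
  shows "sigma_sum \<sigma> F = 2 * int (card {e \<in> F. P e}) - int (card F)"
proof -
  have "sigma_sum \<sigma> F = (\<Sum>e\<in>F. if P e then 1 else -1 :: int)"
    unfolding sigma_sum_def using assms(2) by simp
  also have "\<dots> = int (card {e \<in> F. P e}) - int (card {e \<in> F. \<not> P e})"
    by (simp add: sum.If_cases[OF assms(1)] Collect_conj_eq Int_commute Diff_eq Collect_neg_eq)
  also have "{e \<in> F. \<not> P e} = F - {e \<in> F. P e}"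
    by blast
  finally show ?thesis
    using card_Diff_subset[of "{e \<in> F. P e}" F] card_mono[of F "{e \<in> F. P e}"] assms(1)
    by auto
qed

lemma perfect_matching_card:
  assumes "finite V" and "perfect_matching V M"
  shows "card V = 2 * card M"
proof -
  have edges: "\<And>e. e \<in> M \<Longrightarrow> e \<subseteq> V \<and> card e = 2"
    using assms(2) unfolding perfect_matching_def complete_edges_eq by blast
  have "\<Union>M = V"
    using assms(2) edges unfolding perfect_matching_def by auto
  moreover have "pairwise disjnt M"
    using assms(2) unfolding perfect_matching_def pairwise_def disjnt_def by blast
  then have "card (\<Union>M) = sum card M"
    using edges assms(1) by (intro card_Union_disjoint) (auto intro: finite_subset)
  ultimately show ?thesis
    using edges by simp
qed

lemma perfect_matching_card_leaving:
  assumes "finite V" and "perfect_matching V M"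
  shows "card {e \<in> M. \<not> e \<subseteq> S} \<le> card (V - S)"
proof -
  let ?L = "{e \<in> M. \<not> e \<subseteq> S}"
  define out where "out e = (SOME v. v \<in> e \<and> v \<notin> S)" for e
  have out: "out e \<in> e - S" if "e \<in> ?L" for e
    using that someI_ex[of "\<lambda>v. v \<in> e \<and> v \<notin> S"] unfolding out_def by blast
  have "inj_on out ?L"
  proof
    fix e f assume "e \<in> ?L" "f \<in> ?L" "out e = out f"
    then have "e \<inter> f \<noteq> {}" using out[of e] out[of f] by auto
    with \<open>e \<in> ?L\<close> \<open>f \<in> ?L\<close> show "e = f"
      using assms(2) unfolding perfect_matching_def by blast
  qed
  moreover have "e \<subseteq> V" if "e \<in> M" for e
    using that assms(2) unfolding perfect_matching_def complete_edges_eq by blast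
  then have "out ` ?L \<subseteq> V - S"
    using out by blast
  ultimately show ?thesis
    using card_inj_on_le[of out _ "V - S"] assms(1) by simp
qed

theorem mainTheorem5:
  fixes V :: "'a set" and n :: nat and \<sigma> :: "'a set \<Rightarrow> int"
  assumes "n \<ge> 2"
    and "finite V" and "card V = 4 * n"
    and "\<forall>e\<in>complete_edges V. \<sigma> e \<in> {-1, 1}"
    and "\<exists>S. S \<subseteq> V \<and> card S = 3 * n + 2 \<and>
           (\<forall>e\<in>complete_edges V. \<sigma> e = 1 \<longleftrightarrow> e \<subseteq> S)"
  shows "\<bar>sigma_sum \<sigma> (complete_edges V)\<bar> = int (n^2 + 11 * n + 2) \<and>
         (\<forall>M. perfect_matching V M \<longrightarrow> \<bar>sigma_sum \<sigma> M\<bar> \<ge> 4)"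
proof -
  obtain S where SV: "S \<subseteq> V" and card_S: "card S = 3 * n + 2"
    and pos: "\<forall>e\<in>complete_edges V. \<sigma> e = 1 \<longleftrightarrow> e \<subseteq> S"
    using assms(5) by blast
  have fin_S: "finite S"
    using SV assms(2) finite_subset by blast
  have sign: "\<forall>e\<in>F. \<sigma> e = (if e \<subseteq> S then 1 else -1)" if "F \<subseteq> complete_edges V" for F
    using that pos assms(4) by force
  have "sigma_sum \<sigma> (complete_edges V) = 2 * int (card S choose 2) - int (card V choose 2)"
    using sigma_sum_sign_pattern[OF finite_complete_edges[OF assms(2)] sign[OF order_refl]]
    by (simp add: complete_edges_inside[OF SV] card_complete_edges fin_S assms(2))
  also have "\<dots> = int (n^2 + 11 * n + 2)"
    using double_choose_two_int[of "card S"] double_choose_two_int[of "card V"]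
    unfolding card_S assms(3) by (simp add: algebra_simps power2_eq_square)
  finally have total: "\<bar>sigma_sum \<sigma> (complete_edges V)\<bar> = int (n^2 + 11 * n + 2)"
    by simp
  have "\<bar>sigma_sum \<sigma> M\<bar> \<ge> 4" if M: "perfect_matching V M" for M
  proof -
    have MV: "M \<subseteq> complete_edges V"
      using M unfolding perfect_matching_def by blast
    have fin_M: "finite M"
      using MV finite_complete_edges[OF assms(2)] finite_subset by blast
    have "card (V - S) = n - 2"
      using card_Diff_subset[OF fin_S SV] card_S assms(3) by simp
    then have "card {e \<in> M. \<not> e \<subseteq> S} \<le> n - 2"
      using perfect_matching_card_leaving[OF assms(2) M, of S] by simp
    moreover have "{e \<in> M. \<not> e \<subseteq> S} = M - {e \<in> M. e \<subseteq> S}"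
      by blast
    then have "card {e \<in> M. \<not> e \<subseteq> S} = card M - card {e \<in> M. e \<subseteq> S}"
      using fin_M by (simp add: card_Diff_subset)
    moreover have "card {e \<in> M. e \<subseteq> S} \<le> card M"
      using fin_M by (intro card_mono) auto
    ultimately show ?thesis
      using sigma_sum_sign_pattern[OF fin_M sign[OF MV]] perfect_matching_card[OF assms(2) M]
        assms(1,3) by linarith
  qed
  with total show ?thesis
    by blast
qed

end
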